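(* Let $\mathcal C\subseteq\mathcal L_{n,q}$ be an $\mathbb F_{q^n}$-linear rank metric code of dimension $k$ which contains an MRD code $\mathcal G$ equivalent to a generalized Gabidulin code $\mathcal G_{l,s}$ of dimension $l\le k$ (with $\gcd(s,n)=1$). Then there exist an invertible (permutation) linearized polynomial $p(x)$ and $k-l$ linearized polynomials $q_1(x),\ldots,q_{k-l}(x)$ such that \[\mathcal C=\langle q_1(x),\ldots,q_{k-l}(x),p(x),p(x)^{[s]},\ldots,p(x)^{[s(l-1)]}\rangle_{\mathbb F_{q^n}}.\]
   Context: $q$ is a prime power, $[i]:=q^i$. $\mathcal L_{n,q}$ is the $\mathbb F_{q^n}$-vector space of linearized polynomials $f(x)=\sum_{i=0}^{n-1}a_ix^{[i]}$, $a_i\in\mathbb F_{q^n}$, identified with $\mathbb F_q$-linear maps of $\mathbb F_{q^n}$; a permutation (invertible) polynomial is one inducing a bijection. A rank metric code here is an $\mathbb F_q$-subspace of $\mathcal L_{n,q}$ with rank distance $d(f,g)=\mathrm{rk}(f-g)$; it is MRD if $|\mathcal C|=q^{n(n-d+1)}$, $d$ the minimum distance. For $f(x)=\sum_i a_ix^{[i]}$, $f(x)^{[j]}:=x^{[j]}\circ f(x)=\sum_i a_i^{[j]}x^{[(i+j)\bmod n]}$. $\mathcal G_{l,s}=\langle x,x^{[s]},\ldots,x^{[s(l-1)]}\rangle_{\mathbb F_{q^n}}$ with $\gcd(s,n)=1$. Two codes $\mathcal C,\mathcal C'$ are equivalent if there are invertible $h,g\in\mathcal L_{n,q}$ and a field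 automorphism $\sigma$ (acting on coefficients) with $\{h\circ f^\sigma\circ g\colon f\in\mathcal C\}=\mathcal C'$. *)

theory Defs
  imports "HOL-Number_Theory.Number_Theory" "HOL-Library.Function_Algebras"
begin

(* The field F_{q^n} is a finite field type 'a with CARD('a) = q^n.
   A linearized polynomial sum_{i<n} a_i x^[i] is identified with the
   F_q-linear map of F_{q^n} it induces. *)

definition lin_eval :: "nat \<Rightarrow> nat \<Rightarrow> (nat \<Rightarrow> 'a::field) \<Rightarrow> 'a \<Rightarrow> 'a" where
  "lin_eval q n a = (\<lambda>x. \<Sum>i<n. a i * x ^ (q ^ i))"

definition Lnq :: "nat \<Rightarrow> nat \<Rightarrow> ('a::field \<Rightarrow> 'a) set" where
  "Lnq q n = {lin_eval q n a | a. True}"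

(* coefficients of a linearized polynomial (unique for the field of size q^n) *)
definition coeffs :: "nat \<Rightarrow> nat \<Rightarrow> ('a::field \<Rightarrow> 'a) \<Rightarrow> nat \<Rightarrow> 'a" where
  "coeffs q n f = (SOME a. (\<forall>i\<ge>n. a i = 0) \<and> f = lin_eval q n a)"

definition scl :: "'a::field \<Rightarrow> ('a \<Rightarrow> 'a) \<Rightarrow> ('a \<Rightarrow> 'a)" where
  "scl c f = (\<lambda>x. c * f x)"

definition frob_pow :: "nat \<Rightarrow> nat \<Rightarrow> ('a::field \<Rightarrow> 'a) \<Rightarrow> ('a \<Rightarrow> 'a)" where
  "frob_pow q j f = (\<lambda>x. (f x) ^ (q ^ j))"

definition Fq :: "nat \<Rightarrow> 'a::field set" where
  "Fq q = {x. x ^ q = x}"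

definition Fq_span :: "nat \<Rightarrow> 'a::field set \<Rightarrow> 'a set" where
  "Fq_span q A = {y. \<exists>c. (\<forall>a\<in>A. c a \<in> Fq q) \<and> y = (\<Sum>a\<in>A. c a * a)}"

definition Fq_dim :: "nat \<Rightarrow> 'a::field set \<Rightarrow> nat" where
  "Fq_dim q V = (LEAST r. \<exists>A. finite A \<and> card A = r \<and> Fq_span q A = V)"

definition rk :: "nat \<Rightarrow> ('a::field \<Rightarrow> 'a) \<Rightarrow> nat" where
  "rk q f = Fq_dim q (range f)"

definition rank_code :: "nat \<Rightarrow> nat \<Rightarrow> ('a::field \<Rightarrow> 'a) set \<Rightarrow> bool" where
  "rank_code q n C \<longleftrightarrow> C \<subseteq> Lnq q n \<and> 0 \<in> C \<and>
     (\<forall>f\<in>C. \<forall>g\<in>C. f + g \<in> C) \<and> (\<forall>c\<in>Fq q. \<forall>f\<in>C. scl c f \<in> C)"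

definition min_dist :: "nat \<Rightarrow> ('a::field \<Rightarrow> 'a) set \<Rightarrow> nat" where
  "min_dist q C = Min {rk q (f - g) | f g. f \<in> C \<and> g \<in> C \<and> f \<noteq> g}"

definition is_MRD :: "nat \<Rightarrow> nat \<Rightarrow> ('a::field \<Rightarrow> 'a) set \<Rightarrow> bool" where
  "is_MRD q n C \<longleftrightarrow> rank_code q n C \<and> card C = q ^ (n * (n - min_dist q C + 1))"

definition Gab :: "nat \<Rightarrow> nat \<Rightarrow> nat \<Rightarrow> ('a::field \<Rightarrow> 'a) set" where
  "Gab q l s = module.span scl {(\<lambda>x. x ^ (q ^ (s * i))) | i. i < l}"

definition field_aut :: "('a::field \<Rightarrow> 'a) \<Rightarrow> bool" where
  "field_aut \<sigma> \<longleftrightarrow> bij \<sigma> \<and> (\<forall>a b. \<sigma> (a + b) = \<sigma> a + \<sigma> b) \<and> (\<forall>a b. \<sigma> (a * b) = \<sigma> a * \<sigma> b)"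

definition aut_act :: "nat \<Rightarrow> nat \<Rightarrow> ('a::field \<Rightarrow> 'a) \<Rightarrow> ('a \<Rightarrow> 'a) \<Rightarrow> ('a \<Rightarrow> 'a)" where
  "aut_act q n \<sigma> f = lin_eval q n (\<lambda>i. \<sigma> (coeffs q n f i))"

definition code_equiv :: "nat \<Rightarrow> nat \<Rightarrow> ('a::field \<Rightarrow> 'a) set \<Rightarrow> ('a \<Rightarrow> 'a) set \<Rightarrow> bool" where
  "code_equiv q n C C' \<longleftrightarrow> (\<exists>h g \<sigma>. h \<in> Lnq q n \<and> g \<in> Lnq q n \<and> bij h \<and> bij g \<and>
      field_aut \<sigma> \<and> (\<lambda>f. h \<circ> aut_act q n \<sigma> f \<circ> g) ` C = C')"

end

theory Submission
  imports Defs "HOL-Computational_Algebra.Polynomial" "HOL-Library.Cardinality"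
begin

(* The equivalence says that G consists of the maps sigma^-1 o h^-1 o t o g^-1 o sigma with
   t in G_{l,s}.  The linearized phi for which sigma^-1 o phi o (a x^[si]) o g^-1 o sigma lies in C
   for all a and i < l form an F_{q^n}-subspace (C is F_{q^n}-linear, sigma^-1 is a field
   automorphism) that is closed under phi |-> phi(bx) and contains h^-1.  Such a subspace contains
   a monomial x^[j], since phi(bx) - b^[j0] phi(x) removes the coefficient at j0 while keeping the
   others that differ.  Then p = sigma^-1 o x^[j] o g^-1 o sigma is a permutation polynomial with
   p^[si] in C for i < l.  As gcd(s, n) = 1 and l <= dim C <= n, the exponents si mod n are
   distinct, so these l elements are independent, and extending them to a basis of C gives the q_i. *)

interpretation scl: vector_space "scl :: 'a::field \<Rightarrow> ('a \<Rightarrow> 'a) \<Rightarrow> 'a \<Rightarrow> 'a"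
  by unfold_locales (auto simp: scl_def algebra_simps fun_eq_iff)

definition frob :: "nat \<Rightarrow> nat \<Rightarrow> 'a::field \<Rightarrow> 'a" where
  "frob q j x = x ^ q ^ j"

section \<open>Finite fields\<close>

(* The library's finite_field_power_card_eq_same needs the sort finite_field, which
   {field,finite} does not provide. *)
lemma power_CARD_eq_self:
  fixes x :: "'a::{field,finite}"
  shows "x ^ CARD('a) = x"
proof (cases "x = 0")
  case False
  let ?U = "UNIV - {0::'a}"
  have "bij_betw (\<lambda>y. x * y) ?U ?U"
    using False by (intro bij_betwI[of _ _ _ "\<lambda>y. y / x"]) auto
  hence "(\<Prod>y\<in>?U. x * y) = \<Prod>?U"
    by (rule prod.reindex_bij_betw)
  moreover have "(\<Prod>y\<in>?U. x * y) = x ^ card ?U * \<Prod>?U"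
    by (simp add: prod.distrib)
  ultimately have "x ^ card ?U = 1"
    by simp
  moreover have "CARD('a) = Suc (card ?U)"
    by (simp add: card_Diff_singleton)
  ultimately show ?thesis
    by (metis power_Suc mult_1_right)
qed simp

lemma power_CARD_power_eq_self:
  fixes x :: "'a::{field,finite}"
  shows "x ^ CARD('a) ^ d = x"
  by (induction d) (simp_all add: power_mult power_CARD_eq_self)

lemma field_order_base_exponent:
  assumes "CARD('a::{field,finite}) = q ^ n"
  shows "1 < q" and "0 < n"
proof -
  have "2 \<le> CARD('a)"
    using card_mono[of UNIV "{0::'a, 1}"] by simp
  hence "1 < q ^ n"
    using assms by simp
  show "0 < n"
    using \<open>1 < q ^ n\<close> by (cases n) auto
  show "1 < q"
  proof (rule ccontr)
    assume "\<not> 1 < q"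
    hence "q ^ n \<le> 1"
      by (intro power_le_one) auto
    thus False
      using \<open>1 < q ^ n\<close> by simp
  qed
qed

lemma frob_frob: "frob q i (frob q j x) = frob q (i + j) x"
  unfolding frob_def power_add by (metis power_mult mult.commute)

lemma frob_comp: "frob q i \<circ> frob q j = frob q (i + j)"
  by (simp add: fun_eq_iff frob_frob)

lemma frob_mult: "frob q j (x * y) = frob q j x * frob q j y"
  by (simp add: frob_def power_mult_distrib)

lemma frob_0: "frob q 0 = id"
  by (simp add: frob_def fun_eq_iff)

lemma frob_mod:
  assumes "CARD('a::{field,finite}) = q ^ n"
  shows "(frob q j :: 'a \<Rightarrow> 'a) = frob q (j mod n)"
proof
  fix x :: 'a
  have "q ^ j = (q ^ n) ^ (j div n) * q ^ (j mod n)"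
    by (simp add: power_mult[symmetric] power_add[symmetric])
  hence "x ^ q ^ j = (x ^ CARD('a) ^ (j div n)) ^ q ^ (j mod n)"
    unfolding assms by (simp only: power_mult)
  thus "frob q j x = frob q (j mod n) x"
    by (simp only: frob_def power_CARD_power_eq_self)
qed

lemma frob_multiple_eq_id:
  assumes "CARD('a::{field,finite}) = q ^ n"
  shows "(frob q (n * m) :: 'a \<Rightarrow> 'a) = id"
  using frob_mod[OF assms, of "n * m"] by (simp add: frob_0)

lemma bij_frob:
  assumes "CARD('a::{field,finite}) = q ^ n"
  shows "bij (frob q j :: 'a \<Rightarrow> 'a)"
proof (rule o_bij)
  have "j + (n * j - j) = n * j"
    using field_order_base_exponent(2)[OF assms] by (cases n) auto
  thus "frob q j \<circ> frob q (n * j - j) = (id :: 'a \<Rightarrow> 'a)"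
    and "frob q (n * j - j) \<circ> frob q j = (id :: 'a \<Rightarrow> 'a)"
    using frob_multiple_eq_id[OF assms] by (simp_all add: frob_comp add.commute)
qed

lemma prime_CHAR_finite: "prime CHAR('a::{field,finite})"
  by (intro prime_CHAR_semidom finite_imp_CHAR_pos) simp

lemma exists_CHAR_power_eq:
  assumes "primepow q" "CARD('a::{field,finite}) = q ^ n"
  shows "\<exists>e. q = CHAR('a) ^ e"
proof -
  obtain p e where pe: "prime p" "q = p ^ e"
    using assms(1) unfolding primepow_def by blast
  have "CHAR('a) dvd p ^ (e * n)"
    using CHAR_dvd_CARD[where 'a='a] assms(2) pe(2) by (simp add: power_mult)
  hence "CHAR('a) = p"
    using prime_CHAR_finite pe(1) prime_dvd_power primes_dvd_imp_eq by blast
  thus ?thesis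
    using pe(2) by blast
qed

lemma frob_sum:
  fixes f :: "'b \<Rightarrow> 'a::{field,finite}"
  assumes "primepow q" "CARD('a) = q ^ n"
  shows "frob q j (\<Sum>i\<in>A. f i) = (\<Sum>i\<in>A. frob q j (f i))"
proof -
  obtain e where "q = CHAR('a) ^ e"
    using exists_CHAR_power_eq[OF assms] by blast
  hence "q ^ j = CHAR('a) ^ (e * j)"
    by (simp add: power_mult)
  thus ?thesis
    unfolding frob_def using prime_CHAR_finite by (intro freshmans_dream_sum')
qed

section \<open>Linearized polynomials\<close>

lemma sum_fun_apply: "(\<Sum>i\<in>A. f i) x = (\<Sum>i\<in>A. f i x)"
  by (induction A rule: infinite_finite_induct) auto

lemma frob_pow_eq_comp: "frob_pow q j f = frob q j \<circ> f"
  by (simp add: frob_pow_def frob_def fun_eq_iff)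

lemma lin_eval_eq_sum_frob: "lin_eval q n a = (\<Sum>i<n. scl (a i) (frob q i))"
  by (simp add: lin_eval_def frob_def scl_def sum_fun_apply fun_eq_iff)

lemma frob_eq_lin_eval:
  assumes "j < n"
  shows "frob q j = lin_eval q n (\<lambda>i. of_bool (i = j))"
proof -
  have "{..<n} \<inter> {i. i = j} = {j}"
    using assms by auto
  thus ?thesis
    by (simp add: lin_eval_def frob_def fun_eq_iff)
qed

lemma lin_eval_comp_scaling: "lin_eval q n a \<circ> (\<lambda>x. b * x) = lin_eval q n (\<lambda>i. a i * b ^ q ^ i)"
  by (simp add: lin_eval_def fun_eq_iff power_mult_distrib mult.assoc)

lemma Lnq_subspace: "scl.subspace (Lnq q n)"
proof -
  have "0 = lin_eval q n (\<lambda>_. 0)"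
    and "lin_eval q n a + lin_eval q n b = lin_eval q n (\<lambda>i. a i + b i)"
    and "scl c (lin_eval q n a) = lin_eval q n (\<lambda>i. c * a i)" for a b :: "nat \<Rightarrow> 'a::field" and c
    by (simp_all add: lin_eval_def scl_def fun_eq_iff sum.distrib sum_distrib_left algebra_simps)
  thus ?thesis
    unfolding scl.subspace_def Lnq_def by blast
qed

lemma Lnq_eq_span: "Lnq q n = scl.span (frob q ` {..<n})"
proof
  show "Lnq q n \<subseteq> scl.span (frob q ` {..<n})"
    unfolding Lnq_def lin_eval_eq_sum_frob
    by (auto intro!: scl.span_sum scl.span_scale simp: scl.span_base)
  have "frob q ` {..<n} \<subseteq> Lnq q n"
    unfolding Lnq_def by (auto simp: frob_eq_lin_eval)
  thus "scl.span (frob q ` {..<n}) \<subseteq> Lnq q n"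
    using scl.span_minimal Lnq_subspace by blast
qed

lemma frob_in_Lnq:
  assumes "CARD('a::{field,finite}) = q ^ n"
  shows "(frob q j :: 'a \<Rightarrow> 'a) \<in> Lnq q n"
proof -
  have "j mod n < n"
    using field_order_base_exponent(2)[OF assms] by simp
  hence "frob q (j mod n) \<in> Lnq q n"
    unfolding Lnq_eq_span by (intro scl.span_base imageI) simp
  thus ?thesis
    by (subst frob_mod[OF assms])
qed

lemma dim_le_of_subset_Lnq:
  fixes C :: "('a::field \<Rightarrow> 'a) set"
  assumes "C \<subseteq> Lnq q n"
  shows "scl.dim C \<le> n"
proof -
  have "scl.dim C \<le> card (frob q ` {..<n} :: ('a \<Rightarrow> 'a) set)"
    using assms scl.dim_le_card[of C "frob q ` {..<n}"] by (simp add: Lnq_eq_span)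
  also have "\<dots> \<le> n"
    using card_image_le[of "{..<n}" "frob q"] by simp
  finally show ?thesis .
qed

lemma lin_eval_eq_0_imp_coeff_eq_0:
  assumes "CARD('a::{field,finite}) = q ^ n" and "(lin_eval q n a :: 'a \<Rightarrow> 'a) = 0" and "j < n"
  shows "a j = 0"
proof -
  have q: "1 < q"
    using field_order_base_exponent(1)[OF assms(1)] .
  define P :: "'a poly" where "P = (\<Sum>i<n. monom (a i) (q ^ i))"
  have "P = 0"
  proof (rule ccontr)
    assume "P \<noteq> 0"
    have "{x. poly P x = 0} = UNIV"
      using assms(2) by (auto simp: P_def poly_sum poly_monom lin_eval_def fun_eq_iff)
    hence "CARD('a) \<le> degree P"
      using card_poly_roots_bound[OF \<open>P \<noteq> 0\<close>] by simp
    also have "degree P \<le> q ^ (n - 1)"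
      unfolding P_def
    proof (rule degree_sum_le)
      fix i assume "i \<in> {..<n}"
      hence "q ^ i \<le> q ^ (n - 1)"
        using q by (intro power_increasing) auto
      thus "degree (monom (a i) (q ^ i)) \<le> q ^ (n - 1)"
        using degree_monom_le order_trans by blast
    qed simp
    also have "\<dots> < q ^ n"
      using q field_order_base_exponent(2)[OF assms(1)] by (intro power_strict_increasing) auto
    finally show False
      using assms(1) by simp
  qed
  have "coeff P (q ^ j) = (\<Sum>i<n. if i = j then a i else 0)"
    unfolding P_def coeff_sum coeff_monom using q by (intro sum.cong) auto
  thus ?thesis
    using \<open>P = 0\<close> assms(3) by simp
qed

lemma inj_on_frob:
  assumes "CARD('a::{field,finite}) = q ^ n"
  shows "inj_on (frob q :: nat \<Rightarrow> 'a \<Rightarrow> 'a) {..<n}"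
proof
  fix i j assume ij: "i \<in> {..<n}" "j \<in> {..<n}" and eq: "(frob q i :: 'a \<Rightarrow> 'a) = frob q j"
  let ?a = "\<lambda>k. of_bool (k = i) - of_bool (k = j) :: 'a"
  have "lin_eval q n ?a = frob q i - frob q j"
    using ij by (simp add: frob_eq_lin_eval lin_eval_def fun_eq_iff sum_subtractf left_diff_distrib)
  hence "?a i = 0"
    using lin_eval_eq_0_imp_coeff_eq_0[OF assms, of ?a i] ij eq by simp
  thus "i = j"
    by (auto split: if_splits)
qed

lemma independent_frob:
  assumes "CARD('a::{field,finite}) = q ^ n"
  shows "scl.independent (frob q ` {..<n} :: ('a \<Rightarrow> 'a) set)"
proof (rule scl.independent_if_scalars_zero)
  fix u :: "('a \<Rightarrow> 'a) \<Rightarrow> 'a" and \<phi> :: "'a \<Rightarrow> 'a"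
  assume sum0: "(\<Sum>\<psi>\<in>frob q ` {..<n}. scl (u \<psi>) \<psi>) = 0" and "\<phi> \<in> frob q ` {..<n}"
  then obtain j where j: "j < n" "\<phi> = frob q j"
    by blast
  have u0: "lin_eval q n (u \<circ> frob q) = 0"
    using sum0 by (simp add: lin_eval_eq_sum_frob sum.reindex[OF inj_on_frob[OF assms]] comp_def)
  show "u \<phi> = 0"
    using lin_eval_eq_0_imp_coeff_eq_0[OF assms u0 j(1)] j(2) by simp
qed simp

lemma frob_comp_in_Lnq:
  assumes "primepow q" "CARD('a::{field,finite}) = q ^ n" and "(f :: 'a \<Rightarrow> 'a) \<in> Lnq q n"
  shows "frob q j \<circ> f \<in> Lnq q n"
proof -
  obtain a where f: "f = lin_eval q n a"
    using assms(3) unfolding Lnq_def by blast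
  have "frob q j \<circ> f = (\<Sum>i<n. scl (frob q j (a i)) (frob q (j + i)))"
    by (simp add: f lin_eval_eq_sum_frob fun_eq_iff sum_fun_apply scl_def
        frob_sum[OF assms(1,2)] frob_mult frob_frob)
  also have "\<dots> \<in> Lnq q n"
    by (intro scl.subspace_sum[OF Lnq_subspace] scl.subspace_scale[OF Lnq_subspace] frob_in_Lnq[OF assms(2)])
  finally show ?thesis .
qed

lemma comp_in_Lnq:
  assumes "primepow q" "CARD('a::{field,finite}) = q ^ n"
    and "(f :: 'a \<Rightarrow> 'a) \<in> Lnq q n" "g \<in> Lnq q n"
  shows "f \<circ> g \<in> Lnq q n"
proof -
  obtain a where f: "f = lin_eval q n a"
    using assms(3) unfolding Lnq_def by blast
  have "f \<circ> g = (\<Sum>i<n. scl (a i) (frob q i \<circ> g))"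
    by (simp add: f lin_eval_eq_sum_frob fun_eq_iff sum_fun_apply scl_def)
  also have "\<dots> \<in> Lnq q n"
    by (intro scl.subspace_sum[OF Lnq_subspace] scl.subspace_scale[OF Lnq_subspace] frob_comp_in_Lnq[OF assms(1,2,4)])
  finally show ?thesis .
qed

(* Left composition with h is an injective endomorphism of the finite set L_{n,q}, so it hits id. *)
lemma inv_in_Lnq:
  assumes "primepow q" "CARD('a::{field,finite}) = q ^ n"
    and "(h :: 'a \<Rightarrow> 'a) \<in> Lnq q n" "bij h"
  shows "inv_into UNIV h \<in> Lnq q n"
proof -
  have "(\<lambda>\<phi>. h \<circ> \<phi>) ` Lnq q n = Lnq q n"
  proof (rule endo_inj_surj)
    show "(\<lambda>\<phi>. h \<circ> \<phi>) ` Lnq q n \<subseteq> Lnq q n"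
      using comp_in_Lnq[OF assms(1,2,3)] by blast
    show "inj_on (\<lambda>\<phi>. h \<circ> \<phi>) (Lnq q n)"
      using assms(4) by (auto intro!: inj_onI simp: bij_def inj_on_def fun_eq_iff)
  qed simp
  moreover have "(id :: 'a \<Rightarrow> 'a) \<in> Lnq q n"
    using frob_in_Lnq[OF assms(2), of 0] by (simp add: frob_0)
  ultimately obtain \<phi> where "\<phi> \<in> Lnq q n" "h \<circ> \<phi> = id"
    by (metis imageE)
  moreover have "inv_into UNIV h \<circ> (h \<circ> \<phi>) = \<phi>"
    using assms(4) by (simp add: bij_is_inj flip: comp_assoc)
  ultimately show ?thesis
    by simp
qed

section \<open>Field automorphisms and equivalence of codes\<close>

lemma field_aut_add: "field_aut \<sigma> \<Longrightarrow> \<sigma> (x + y) = \<sigma> x + \<sigma> y"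
  by (simp add: field_aut_def)

lemma field_aut_mult: "field_aut \<sigma> \<Longrightarrow> \<sigma> (x * y) = \<sigma> x * \<sigma> y"
  by (simp add: field_aut_def)

lemma field_aut_0: "field_aut \<sigma> \<Longrightarrow> \<sigma> (0 :: 'a::field) = 0"
  by (metis add_cancel_right_right add_0 field_aut_add)

lemma field_aut_1:
  assumes "field_aut (\<sigma> :: 'a::field \<Rightarrow> 'a)"
  shows "\<sigma> 1 = 1"
proof -
  have "\<sigma> 1 \<noteq> 0"
    using assms field_aut_0[OF assms] unfolding field_aut_def bij_def inj_def by (metis one_neq_zero)
  moreover have "\<sigma> 1 * \<sigma> 1 = \<sigma> 1"
    using field_aut_mult[OF assms, of 1 1] by simp
  ultimately show ?thesis
    by simp
qed

lemma field_aut_power: "field_aut \<sigma> \<Longrightarrow> \<sigma> ((x :: 'a::field) ^ k) = \<sigma> x ^ k"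
  by (induction k) (simp_all add: field_aut_1 field_aut_mult)

lemma field_aut_sum: "field_aut \<sigma> \<Longrightarrow> \<sigma> (\<Sum>i\<in>A. f i :: 'a::field) = (\<Sum>i\<in>A. \<sigma> (f i))"
  by (induction A rule: infinite_finite_induct) (simp_all add: field_aut_0 field_aut_add)

lemma field_aut_frob: "field_aut \<sigma> \<Longrightarrow> \<sigma> (frob q j x) = frob q j (\<sigma> (x :: 'a::field))"
  by (simp add: frob_def field_aut_power)

lemma aut_act_in_Lnq: "aut_act q n \<sigma> f \<in> Lnq q n"
  by (auto simp: aut_act_def Lnq_def)

lemma field_aut_inv:
  assumes "field_aut (\<sigma> :: 'a::field \<Rightarrow> 'a)"
  shows "field_aut (inv_into UNIV \<sigma>)"
proof -
  have "bij \<sigma>"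
    using assms by (simp add: field_aut_def)
  hence inv_eq: "inv_into UNIV \<sigma> y = x \<longleftrightarrow> y = \<sigma> x" and "\<sigma> (inv_into UNIV \<sigma> y) = y" for x y
    by (auto simp: bij_is_inj bij_is_surj surj_f_inv_f)
  thus ?thesis
    using bij_imp_bij_inv[OF \<open>bij \<sigma>\<close>]
    by (simp add: field_aut_def inv_eq field_aut_add[OF assms] field_aut_mult[OF assms])
qed

lemma lin_eval_coeffs:
  assumes "f \<in> Lnq q n"
  shows "lin_eval q n (Defs.coeffs q n f) = f"
proof -
  obtain a where "f = lin_eval q n a"
    using assms unfolding Lnq_def by blast
  hence "f = lin_eval q n (\<lambda>i. if i < n then a i else 0)"
    by (simp add: lin_eval_def)
  hence "\<exists>b. (\<forall>i\<ge>n. b i = 0) \<and> f = lin_eval q n b"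
    by (intro exI[of _ "\<lambda>i. if i < n then a i else 0"]) auto
  hence "(\<forall>i\<ge>n. Defs.coeffs q n f i = 0) \<and> f = lin_eval q n (Defs.coeffs q n f)"
    unfolding Defs.coeffs_def by (rule someI_ex)
  thus ?thesis
    by simp
qed

lemma aut_act_eq_conj:
  assumes "field_aut (\<sigma> :: 'a::field \<Rightarrow> 'a)" and "f \<in> Lnq q n"
  shows "aut_act q n \<sigma> f = \<sigma> \<circ> f \<circ> inv_into UNIV \<sigma>"
proof
  fix y
  have y: "\<sigma> (inv_into UNIV \<sigma> y) = y"
    using assms(1) by (simp add: field_aut_def bij_is_surj surj_f_inv_f)
  have "(\<sigma> \<circ> f \<circ> inv_into UNIV \<sigma>) y = \<sigma> (lin_eval q n (Defs.coeffs q n f) (inv_into UNIV \<sigma> y))"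
    by (simp add: lin_eval_coeffs[OF assms(2)])
  also have "\<dots> = aut_act q n \<sigma> f y"
    by (simp add: aut_act_def lin_eval_def field_aut_sum[OF assms(1)] field_aut_mult[OF assms(1)]
        field_aut_power[OF assms(1)] y)
  finally show "aut_act q n \<sigma> f y = (\<sigma> \<circ> f \<circ> inv_into UNIV \<sigma>) y" ..
qed

lemma conj_mem_of_code_image:
  assumes "(\<lambda>f. h \<circ> aut_act q n \<sigma> f \<circ> g) ` G = G'" and "G \<subseteq> Lnq q n"
    and "field_aut \<sigma>" "bij h" "bij g" and "t \<in> G'"
  shows "inv_into UNIV \<sigma> \<circ> inv_into UNIV h \<circ> t \<circ> inv_into UNIV g \<circ> \<sigma> \<in> G"
proof -
  obtain f where f: "f \<in> G" "t = h \<circ> aut_act q n \<sigma> f \<circ> g"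
    using assms(1,6) by blast
  have "bij \<sigma>"
    using assms(3) by (simp add: field_aut_def)
  have "inv_into UNIV \<sigma> \<circ> inv_into UNIV h \<circ> t \<circ> inv_into UNIV g \<circ> \<sigma> = f"
    using f(1) assms(2-5) \<open>bij \<sigma>\<close>
    by (auto simp: f(2) aut_act_eq_conj fun_eq_iff bij_is_inj bij_is_surj surj_f_inv_f)
  thus ?thesis
    using f(1) by simp
qed

section \<open>A monomial in every scaling-closed subspace\<close>

lemma lin_eval_single_coeff:
  assumes "j < n" and "\<And>i. i < n \<Longrightarrow> i \<noteq> j \<Longrightarrow> a i = 0"
  shows "lin_eval q n a = scl (a j) (frob q j)"
proof
  fix x
  have "lin_eval q n a x = (\<Sum>i<n. if i = j then a j * x ^ q ^ j else 0)"
    unfolding lin_eval_def using assms(2) by (intro sum.cong) auto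
  thus "lin_eval q n a x = scl (a j) (frob q j) x"
    using assms(1) by (simp add: scl_def frob_def)
qed

lemma lin_eval_comp_scaling_diff:
  "(lin_eval q n a \<circ> (\<lambda>x. b * x)) - scl (b ^ q ^ j) (lin_eval q n a)
     = lin_eval q n (\<lambda>i. a i * (b ^ q ^ i - b ^ q ^ j))"
  by (simp add: lin_eval_comp_scaling lin_eval_def scl_def fun_eq_iff sum_distrib_left
      algebra_simps flip: sum_subtractf)

(* Induction on the number of nonzero coefficients: f(bx) - b^[j0] f(x) kills the coefficient at j0. *)
lemma ex_frob_mem_if_scaling_closed:
  fixes S :: "('a::{field,finite} \<Rightarrow> 'a) set"
  assumes card: "CARD('a) = q ^ n" and S: "scl.subspace S"
    and scaling: "\<And>\<phi> b. \<phi> \<in> S \<Longrightarrow> \<phi> \<circ> (\<lambda>x. b * x) \<in> S"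
    and "lin_eval q n a \<in> S" and "(lin_eval q n a :: 'a \<Rightarrow> 'a) \<noteq> 0"
  shows "\<exists>j. frob q j \<in> S"
  using assms(4,5)
proof (induction "card {i. i < n \<and> a i \<noteq> 0}" arbitrary: a rule: less_induct)
  case less
  have "\<exists>j0. j0 < n \<and> a j0 \<noteq> 0"
  proof (rule ccontr)
    assume "\<nexists>j0. j0 < n \<and> a j0 \<noteq> 0"
    hence "lin_eval q n a = 0"
      by (simp add: lin_eval_def fun_eq_iff)
    thus False
      using less.prems(2) by simp
  qed
  then obtain j0 where j0: "j0 < n" "a j0 \<noteq> 0"
    by blast
  show ?case
  proof (cases "\<exists>j1. j1 < n \<and> a j1 \<noteq> 0 \<and> j1 \<noteq> j0")
    case False
    hence "lin_eval q n a = scl (a j0) (frob q j0)"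
      using j0(1) by (intro lin_eval_single_coeff) auto
    hence "frob q j0 = scl (inverse (a j0)) (lin_eval q n a)"
      using j0(2) by (simp add: scl_def fun_eq_iff)
    thus ?thesis
      using scl.subspace_scale[OF S less.prems(1), of "inverse (a j0)"] by (intro exI[of _ j0]) simp
  next
    case True
    then obtain j1 where j1: "j1 < n" "a j1 \<noteq> 0" "j1 \<noteq> j0"
      by blast
    have "frob q j1 \<noteq> (frob q j0 :: 'a \<Rightarrow> 'a)"
      using inj_on_frob[OF card] j0(1) j1(1,3) by (auto dest: inj_onD)
    then obtain b :: 'a where b: "b ^ q ^ j1 \<noteq> b ^ q ^ j0"
      by (auto simp: frob_def fun_eq_iff)
    define d where "d = (\<lambda>i. a i * (b ^ q ^ i - b ^ q ^ j0))"
    have "(lin_eval q n a \<circ> (\<lambda>x. b * x)) - scl (b ^ q ^ j0) (lin_eval q n a) \<in> S"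
      using scl.subspace_diff[OF S scaling[OF less.prems(1)] scl.subspace_scale[OF S less.prems(1)]] .
    hence "lin_eval q n d \<in> S"
      by (simp only: d_def lin_eval_comp_scaling_diff)
    moreover have "lin_eval q n d \<noteq> 0"
      using lin_eval_eq_0_imp_coeff_eq_0[OF card _ j1(1), of d] j1(2) b by (auto simp: d_def)
    moreover have "card {i. i < n \<and> d i \<noteq> 0} < card {i. i < n \<and> a i \<noteq> 0}"
    proof -
      have "{i. i < n \<and> d i \<noteq> 0} \<subseteq> {i. i < n \<and> a i \<noteq> 0} - {j0}"
        by (auto simp: d_def)
      hence "card {i. i < n \<and> d i \<noteq> 0} \<le> card ({i. i < n \<and> a i \<noteq> 0} - {j0})"
        by (intro card_mono) auto
      also have "\<dots> < card {i. i < n \<and> a i \<noteq> 0}"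
        using j0 by (intro card_Diff1_less) auto
      finally show ?thesis .
    qed
    ultimately show ?thesis
      using less.hyps by blast
  qed
qed

(* The set of all phi that could replace H is a scaling-closed subspace, so it contains a monomial. *)
lemma ex_frob_transfer:
  fixes C :: "('a::{field,finite} \<Rightarrow> 'a) set" and e :: "'i \<Rightarrow> 'a \<Rightarrow> 'a"
  assumes card: "CARD('a) = q ^ n" and C: "scl.subspace C" and \<tau>: "field_aut \<tau>"
    and "H \<in> Lnq q n" "H \<noteq> 0" and H: "\<And>a i. i \<in> I \<Longrightarrow> \<tau> \<circ> H \<circ> (\<lambda>x. a * e i x) \<circ> v \<in> C"
  shows "\<exists>j. \<forall>i\<in>I. \<tau> \<circ> frob q j \<circ> e i \<circ> v \<in> C"
proof -
  define S where "S = {\<phi>. \<forall>a. \<forall>i\<in>I. \<tau> \<circ> \<phi> \<circ> (\<lambda>x. a * e i x) \<circ> v \<in> C}"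
  have "\<tau> \<circ> 0 \<circ> w \<circ> u = 0"
    and "\<tau> \<circ> (\<phi> + \<psi>) \<circ> w \<circ> u = (\<tau> \<circ> \<phi> \<circ> w \<circ> u) + (\<tau> \<circ> \<psi> \<circ> w \<circ> u)"
    and "\<tau> \<circ> scl c \<phi> \<circ> w \<circ> u = scl (\<tau> c) (\<tau> \<circ> \<phi> \<circ> w \<circ> u)" for \<phi> \<psi> w u :: "'a \<Rightarrow> 'a" and c
    by (simp_all add: fun_eq_iff scl_def field_aut_0[OF \<tau>] field_aut_add[OF \<tau>] field_aut_mult[OF \<tau>])
  hence "scl.subspace S"
    unfolding scl.subspace_def S_def
    by (simp add: scl.subspace_0[OF C] scl.subspace_add[OF C] scl.subspace_scale[OF C])
  moreover have "\<phi> \<circ> (\<lambda>x. b * x) \<in> S" if "\<phi> \<in> S" for \<phi> b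
  proof -
    have "\<tau> \<circ> (\<phi> \<circ> (\<lambda>x. b * x)) \<circ> (\<lambda>x. a * e i x) = \<tau> \<circ> \<phi> \<circ> (\<lambda>x. (b * a) * e i x)" for a i
      by (simp add: fun_eq_iff mult.assoc)
    thus ?thesis
      using that by (auto simp: S_def)
  qed
  moreover obtain a where "H = lin_eval q n a"
    using \<open>H \<in> Lnq q n\<close> unfolding Lnq_def by blast
  moreover have "H \<in> S"
    using H by (simp add: S_def)
  ultimately obtain j where "frob q j \<in> S"
    using ex_frob_mem_if_scaling_closed[OF card] \<open>H \<noteq> 0\<close> by blast
  hence "\<forall>i\<in>I. \<tau> \<circ> frob q j \<circ> (\<lambda>x. 1 * e i x) \<circ> v \<in> C"
    unfolding S_def by blast
  thus ?thesis
    by auto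
qed

section \<open>The span decomposition\<close>

lemma ex_bij_frob_pows_mem:
  fixes C G :: "('a::{field,finite} \<Rightarrow> 'a) set"
  assumes q: "primepow q" "CARD('a) = q ^ n"
    and "C \<subseteq> Lnq q n" "scl.subspace C" "G \<subseteq> C" "code_equiv q n G (Gab q l s)"
  shows "\<exists>p\<in>Lnq q n. bij p \<and> (\<forall>i<l. frob_pow q (s * i) p \<in> C)"
proof -
  obtain h g \<sigma> where hg: "h \<in> Lnq q n" "g \<in> Lnq q n" "bij h" "bij g" and \<sigma>: "field_aut \<sigma>"
    and img: "(\<lambda>f. h \<circ> aut_act q n \<sigma> f \<circ> g) ` G = Gab q l s"
    using assms(6) unfolding code_equiv_def by blast
  have "bij \<sigma>"
    using \<sigma> by (simp add: field_aut_def)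
  define \<tau> where "\<tau> = inv_into UNIV \<sigma>"
  define v where "v = inv_into UNIV g \<circ> \<sigma>"
  have \<tau>: "field_aut \<tau>"
    unfolding \<tau>_def by (rule field_aut_inv[OF \<sigma>])
  have "inv_into UNIV h (h 1) = 1"
    using hg(3) by (simp add: bij_is_inj)
  hence "inv_into UNIV h \<noteq> 0"
    by (metis one_neq_zero zero_fun_def)
  moreover have "\<tau> \<circ> inv_into UNIV h \<circ> (\<lambda>x. a * frob q (s * i) x) \<circ> v \<in> C" if "i < l" for a i
  proof -
    have "scl a (\<lambda>x. x ^ q ^ (s * i)) \<in> Gab q l s"
      unfolding Gab_def using that by (intro scl.span_scale scl.span_base) auto
    moreover have "scl a (\<lambda>x. x ^ q ^ (s * i)) = (\<lambda>x. a * frob q (s * i) x)"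
      by (simp add: scl_def frob_def)
    ultimately have "\<tau> \<circ> inv_into UNIV h \<circ> (\<lambda>x. a * frob q (s * i) x) \<circ> inv_into UNIV g \<circ> \<sigma> \<in> G"
      unfolding \<tau>_def using conj_mem_of_code_image[OF img _ \<sigma> hg(3,4)] assms(3,5) by auto
    thus ?thesis
      using assms(5) by (auto simp: v_def comp_assoc)
  qed
  ultimately obtain j where j: "\<forall>i\<in>{..<l}. \<tau> \<circ> frob q j \<circ> frob q (s * i) \<circ> v \<in> C"
    using ex_frob_transfer[OF q(2) assms(4) \<tau> inv_in_Lnq[OF q hg(1,3)], of "{..<l}" "\<lambda>i. frob q (s * i)" v]
    by auto
  define p where "p = \<tau> \<circ> frob q j \<circ> v"
  have "frob_pow q (s * i) p = \<tau> \<circ> frob q j \<circ> frob q (s * i) \<circ> v" for i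
    by (simp add: p_def frob_pow_eq_comp fun_eq_iff field_aut_frob[OF \<tau>] frob_frob add.commute)
  hence "\<forall>i<l. frob_pow q (s * i) p \<in> C"
    using j by simp
  moreover have "bij p"
    unfolding p_def \<tau>_def v_def
    by (intro bij_comp bij_imp_bij_inv bij_frob[OF q(2)] \<open>bij \<sigma>\<close> hg(4))
  moreover have "p \<in> Lnq q n"
  proof -
    have "frob q j \<circ> inv_into UNIV g \<in> Lnq q n"
      by (intro frob_comp_in_Lnq[OF q] inv_in_Lnq[OF q hg(2,4)])
    moreover have "p = aut_act q n \<tau> (frob q j \<circ> inv_into UNIV g)"
      using aut_act_eq_conj[OF \<tau> calculation] inv_inv_eq[OF \<open>bij \<sigma>\<close>]
      by (simp add: p_def v_def \<tau>_def comp_assoc)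
    ultimately show ?thesis
      by (simp add: aut_act_in_Lnq)
  qed
  ultimately show ?thesis
    by blast
qed

lemma inj_on_mult_mod:
  fixes s n l :: nat
  assumes "coprime s n" and "l \<le> n"
  shows "inj_on (\<lambda>i. s * i mod n) {..<l}"
proof
  fix i i' assume ii: "i \<in> {..<l}" "i' \<in> {..<l}" and "s * i mod n = s * i' mod n"
  hence "[i = i'] (mod n)"
    using cong_mult_lcancel_nat[OF assms(1)] by (simp add: cong_def)
  thus "i = i'"
    using ii assms(2) by (simp add: cong_def)
qed

lemma frob_pows_independent:
  assumes card: "CARD('a::{field,finite}) = q ^ n"
    and "bij (p :: 'a \<Rightarrow> 'a)" "coprime s n" "l \<le> n"
  shows "scl.independent {frob_pow q (s * i) p | i. i < l}"
    and "card {frob_pow q (s * i) p | i. i < l} = l"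
proof -
  let ?r = "\<lambda>i. s * i mod n"
  let ?R = "\<lambda>\<phi> :: 'a \<Rightarrow> 'a. \<phi> \<circ> p"
  have "frob_pow q (s * i) p = ?R (frob q (?r i))" for i
    using frob_mod[OF card, of "s * i"] by (simp add: frob_pow_eq_comp)
  hence P: "{frob_pow q (s * i) p | i. i < l} = ?R ` frob q ` ?r ` {..<l}"
    by auto
  have r: "?r ` {..<l} \<subseteq> {..<n}"
    using field_order_base_exponent(2)[OF card] by auto
  have "module_hom scl scl ?R"
    by unfold_locales (auto simp: scl_def fun_eq_iff algebra_simps)
  moreover have "scl.independent (frob q ` ?r ` {..<l} :: ('a \<Rightarrow> 'a) set)"
    using image_mono[OF r] by (rule scl.independent_mono[OF independent_frob[OF card]])
  moreover have "inj ?R"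
  proof (rule injI)
    fix \<phi> \<psi> :: "'a \<Rightarrow> 'a"
    assume "\<phi> \<circ> p = \<psi> \<circ> p"
    thus "\<phi> = \<psi>"
      using bij_is_surj[OF assms(2)] by (intro surj_fun_eq[of p UNIV]) auto
  qed
  ultimately show "scl.independent {frob_pow q (s * i) p | i. i < l}"
    unfolding P by (rule module_hom.independent_inj_image)
  have "card (?R ` frob q ` ?r ` {..<l}) = l"
    using \<open>inj ?R\<close> inj_on_subset[OF inj_on_frob[OF card] r] inj_on_mult_mod[OF assms(3,4)]
    by (simp add: card_image inj_on_subset)
  thus "card {frob_pow q (s * i) p | i. i < l} = l"
    unfolding P .
qed

lemma ex_list_extending_independent:
  fixes C P :: "('a::{field,finite} \<Rightarrow> 'a) set"
  assumes "scl.subspace C" "P \<subseteq> C" "scl.independent P"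
  shows "\<exists>Q. length Q = scl.dim C - card P \<and> set Q \<subseteq> C \<and> C = scl.span (set Q \<union> P)"
proof -
  obtain B where B: "P \<subseteq> B" "B \<subseteq> C" "scl.independent B" "C \<subseteq> scl.span B"
    using scl.maximal_independent_subset_extend[OF assms(2,3)] by blast
  obtain Q where Q: "set Q = B - P" "distinct Q"
    using finite_distinct_list[of "B - P"] by auto
  have "length Q = card B - card P"
    using distinct_card[OF Q(2)] Q(1) B(1) by (simp add: card_Diff_subset)
  moreover have "card B = scl.dim C"
    using scl.basis_card_eq_dim[OF B(2,4,3)] .
  moreover have "set Q \<union> P = B"
    using Q(1) B(1) by blast
  moreover have "scl.span B \<subseteq> C"
    using scl.span_minimal[OF B(2) assms(1)] .
  ultimately show ?thesis
    using B(2,4) by (intro exI[of _ Q]) auto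
qed

theorem lemma3p7:
  fixes C G :: "('a::{field,finite} \<Rightarrow> 'a) set" and q n k l s :: nat
  assumes "primepow q" and "n \<ge> 1" and "card (UNIV :: 'a set) = q ^ n"
    and "coprime s n"
    and "C \<subseteq> Lnq q n" and "module.subspace scl C" and "vector_space.dim scl C = k"
    and "G \<subseteq> C" and "is_MRD q n G" and "code_equiv q n G (Gab q l s)"
    and "l \<le> k"
  shows "\<exists>p Q. p \<in> Lnq q n \<and> bij p \<and> length Q = k - l \<and> set Q \<subseteq> Lnq q n \<and>
     C = module.span scl (set Q \<union> {frob_pow q (s * i) p | i. i < l})"
proof -
  obtain p where p: "p \<in> Lnq q n" "bij p" "\<forall>i<l. frob_pow q (s * i) p \<in> C"
    using ex_bij_frob_pows_mem[OF assms(1,3,5,6,8,10)] by blast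
  have "l \<le> n"
    using dim_le_of_subset_Lnq[OF assms(5)] assms(7,11) by simp
  note P = frob_pows_independent[OF assms(3) p(2) assms(4) this]
  have "{frob_pow q (s * i) p | i. i < l} \<subseteq> C"
    using p(3) by blast
  then obtain Q where "length Q = k - l" "set Q \<subseteq> C" "C = scl.span (set Q \<union> {frob_pow q (s * i) p | i. i < l})"
    using ex_list_extending_independent[OF assms(6) _ P(1)] P(2) assms(7) by auto
  thus ?thesis
    using p(1,2) assms(5) by blast
qed

end
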